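(* Let $N\ge 1$ and let $U_1,\dots,U_N$ be independent real random variables, each super-uniform, i.e. $\mathbb P(U_i\le x)\le x$ for all $x\in[0,1]$ (and $\mathbb P(U_i< 0)=0$). Then for every $\delta\in(0,1]$, $$\mathbb P\Big(\forall t>0,\ \frac1N\sum_{i=1}^N \mathbf 1\{U_i\le t\}<\frac{t}{\delta}\Big)\ \ge\ 1-\delta .$$
   Context: Note the strict inequality "$<$" inside the probability. *)

theory Defs
  imports "HOL-Probability.Probability"
begin

end

theory Submission
  imports Defs
begin

(* Up to a grid argument, the bad event says that for some k \<le> N at least k of the U_i are
   \<le> \<delta> k / N; let R be the largest such k (the number of rejections of the Benjamini-Hochberg
   step-up procedure). On {R = r} exactly r of the U_i lie below \<delta> r / N, so
   r P(R = r) = \<Sum>_i P(R = r, U_i \<le> \<delta> r / N). On {U_i \<le> \<delta> r / N} the event {R = r} coincides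
   with {R_i = r}, where R_i is computed from the other variables with U_i counted as a rejection
   in advance. R_i is independent of U_i, hence P(R = r) \<le> \<delta> / N \<Sum>_i P(R_i = r), and for each i
   the events {R_i = r} are disjoint in r, which gives P(R \<ge> 1) \<le> \<delta>. *)

(* r is the number of rejections of the step-up procedure with thresholds s 1 \<le> ... \<le> s N
   applied to the values y j, j \<in> L, when c further values are counted as lying below every
   threshold. *)

definition step_up_index ::
    "(nat \<Rightarrow> real) \<Rightarrow> nat \<Rightarrow> nat \<Rightarrow> (nat \<Rightarrow> real) \<Rightarrow> nat set \<Rightarrow> nat \<Rightarrow> bool" where
  "step_up_index s N c y L r \<longleftrightarrow>
     r \<le> c + card {j \<in> L. y j \<le> s r} \<and> (\<forall>k\<in>{r<..N}. c + card {j \<in> L. y j \<le> s k} < k)"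

lemma step_up_index_restrict:
  "step_up_index s N c (restrict y L) L r \<longleftrightarrow> step_up_index s N c y L r"
  unfolding step_up_index_def by (simp cong: conj_cong)

lemma step_up_index_unique:
  assumes "step_up_index s N c y L r" "step_up_index s N c y L r'" "r \<le> N" "r' \<le> N"
  shows "r = r'"
  using assms unfolding step_up_index_def
  by (metis greaterThanAtMost_iff leD linorder_neqE_nat)

lemma ex_step_up_index_iff:
  "(\<exists>r\<in>{1..N}. step_up_index s N c y L r) \<longleftrightarrow> (\<exists>k\<in>{1..N}. k \<le> c + card {j \<in> L. y j \<le> s k})"
proof
  define K where "K = {k\<in>{1..N}. k \<le> c + card {j \<in> L. y j \<le> s k}}"
  assume "\<exists>k\<in>{1..N}. k \<le> c + card {j \<in> L. y j \<le> s k}"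
  then have "K \<noteq> {}" unfolding K_def by blast
  then have "Max K \<in> K" unfolding K_def by (intro Max_in) auto
  moreover have "c + card {j \<in> L. y j \<le> s k} < k" if k: "k \<in> {Max K<..N}" for k
  proof (rule ccontr)
    assume "\<not> c + card {j \<in> L. y j \<le> s k} < k"
    with k \<open>Max K \<in> K\<close> have "k \<in> K" unfolding K_def by auto
    then have "k \<le> Max K" by (simp add: K_def)
    with k show False by simp
  qed
  ultimately show "\<exists>r\<in>{1..N}. step_up_index s N c y L r"
    unfolding step_up_index_def K_def by blast
qed (auto simp: step_up_index_def)

lemma step_up_index_card_eq:
  assumes "step_up_index s N 0 y L r" and "mono s" and "finite L" and "card L \<le> N"
  shows "card {j \<in> L. y j \<le> s r} = r"
proof (rule ccontr)
  define m where "m = card {j \<in> L. y j \<le> s r}"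
  assume "m \<noteq> r"
  with assms(1) have "r < m" unfolding step_up_index_def m_def by simp
  have "m \<le> N"
    using card_mono[OF \<open>finite L\<close>, of "{j \<in> L. y j \<le> s r}"] assms(4) unfolding m_def by auto
  have "{j \<in> L. y j \<le> s r} \<subseteq> {j \<in> L. y j \<le> s m}"
    using \<open>mono s\<close> \<open>r < m\<close> by (auto dest: monoD[of s r m])
  then have "m \<le> card {j \<in> L. y j \<le> s m}"
    unfolding m_def using \<open>finite L\<close> by (intro card_mono) auto
  moreover have "card {j \<in> L. y j \<le> s m} < m"
    using assms(1) \<open>r < m\<close> \<open>m \<le> N\<close> unfolding step_up_index_def by simp
  ultimately show False by simp
qed

lemma step_up_index_remove:
  assumes "mono s" and "finite L" and "i \<in> L" and "y i \<le> s r"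
  shows "step_up_index s N c y L r \<longleftrightarrow> step_up_index s N (c + 1) y (L - {i}) r"
proof -
  have "card {j \<in> L. y j \<le> s k} = Suc (card {j \<in> L - {i}. y j \<le> s k})" if "r \<le> k" for k
  proof -
    have "y i \<le> s k" using assms(4) monoD[OF \<open>mono s\<close> that] by linarith
    then have "{j \<in> L. y j \<le> s k} = insert i {j \<in> L - {i}. y j \<le> s k}"
      using \<open>i \<in> L\<close> by auto
    then show ?thesis using \<open>finite L\<close> by simp
  qed
  then show ?thesis unfolding step_up_index_def by force
qed

lemma borel_measurable_card_le:
  fixes X :: "'i \<Rightarrow> 'a \<Rightarrow> real"
  assumes "finite L" and "\<And>j. j \<in> L \<Longrightarrow> X j \<in> borel_measurable M"
  shows "(\<lambda>\<omega>. real (card {j \<in> L. X j \<omega> \<le> t})) \<in> borel_measurable M"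
proof -
  have "real (card {j \<in> L. X j \<omega> \<le> t}) = (\<Sum>j\<in>L. if X j \<omega> \<le> t then 1 else 0)" for \<omega>
    unfolding real_of_card sum.inter_filter[OF \<open>finite L\<close>] ..
  moreover have "(\<lambda>\<omega>. \<Sum>j\<in>L. if X j \<omega> \<le> t then 1 else 0 :: real) \<in> borel_measurable M"
  proof (rule borel_measurable_sum)
    fix j assume "j \<in> L"
    then have [measurable]: "X j \<in> borel_measurable M" by (rule assms(2))
    show "(\<lambda>\<omega>. if X j \<omega> \<le> t then 1 else 0 :: real) \<in> borel_measurable M" by measurable
  qed
  ultimately show ?thesis by simp
qed

lemma sets_step_up_index:
  fixes X :: "nat \<Rightarrow> 'a \<Rightarrow> real"
  assumes "finite L" and "\<And>j. j \<in> L \<Longrightarrow> X j \<in> borel_measurable M"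
  shows "{\<omega> \<in> space M. step_up_index s N c (\<lambda>j. X j \<omega>) L r} \<in> sets M"
proof -
  have [measurable]: "(\<lambda>\<omega>. real (card {j \<in> L. X j \<omega> \<le> s k})) \<in> borel_measurable M" for k
    using assms by (rule borel_measurable_card_le)
  have "{\<omega> \<in> space M. step_up_index s N c (\<lambda>j. X j \<omega>) L r} =
      {\<omega> \<in> space M. real r \<le> real c + real (card {j \<in> L. X j \<omega> \<le> s r}) \<and>
        (\<forall>k\<in>{r<..N}. real c + real (card {j \<in> L. X j \<omega> \<le> s k}) < real k)}"
    unfolding step_up_index_def of_nat_add[symmetric] of_nat_le_iff of_nat_less_iff ..
  also have "\<dots> \<in> sets M" by measurable
  finally show ?thesis .
qed

lemma (in finite_measure) sum_measure_Int_eq_card: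
  assumes "finite I" and "E \<in> sets M" and "\<And>i. i \<in> I \<Longrightarrow> A i \<in> sets M"
    and "\<And>\<omega>. \<omega> \<in> E \<Longrightarrow> card {i \<in> I. \<omega> \<in> A i} = r"
  shows "(\<Sum>i\<in>I. measure M (E \<inter> A i)) = real r * measure M E"
proof -
  have integrable: "integrable M (indicator (E \<inter> A i) :: 'a \<Rightarrow> real)" if "i \<in> I" for i
    using assms(2,3) that
    by (simp add: integrable_indicator_iff Int_absorb2 sets.sets_into_space less_top[symmetric])
  have pointwise: "(\<Sum>i\<in>I. indicator (E \<inter> A i) \<omega>) = real r * indicator E \<omega>" for \<omega>
  proof (cases "\<omega> \<in> E")
    case True
    then have "(\<Sum>i\<in>I. indicator (E \<inter> A i) \<omega>) = (\<Sum>i\<in>I. if \<omega> \<in> A i then 1 else 0)"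
      by (intro sum.cong) (auto simp: indicator_def)
    also have "\<dots> = real (card {i \<in> I. \<omega> \<in> A i})"
      unfolding real_of_card sum.inter_filter[OF assms(1)] ..
    finally show ?thesis using True assms(4) by simp
  qed simp
  have "(\<Sum>i\<in>I. measure M (E \<inter> A i)) = (\<Sum>i\<in>I. integral\<^sup>L M (indicator (E \<inter> A i)))"
    using assms(2,3) by (intro sum.cong) (simp_all add: sets.Int)
  also have "\<dots> = integral\<^sup>L M (\<lambda>\<omega>. \<Sum>i\<in>I. indicator (E \<inter> A i) \<omega>)"
    using integrable by (rule Bochner_Integration.integral_sum[symmetric])
  also have "\<dots> = real r * measure M E"
    using assms(2) sets.sets_into_space by (simp add: pointwise Int_absorb2)
  finally show ?thesis .
qed

lemma (in prob_space) indep_vars_prob_component_rest: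
  assumes "indep_vars (\<lambda>_. borel) X I" and "i \<in> I" and "B \<in> sets borel"
    and "{y \<in> space (PiM (I - {i}) (\<lambda>_. borel)). Q y} \<in> sets (PiM (I - {i}) (\<lambda>_. borel))"
    and "\<And>y. Q (restrict y (I - {i})) = Q y"
  shows "prob {\<omega> \<in> space M. X i \<omega> \<in> B \<and> Q (\<lambda>j. X j \<omega>)} =
    prob {\<omega> \<in> space M. X i \<omega> \<in> B} * prob {\<omega> \<in> space M. Q (\<lambda>j. X j \<omega>)}"
proof -
  have split: "indep_var (PiM {i} (\<lambda>_. borel)) (\<lambda>\<omega>. restrict (\<lambda>j. X j \<omega>) {i})
      (PiM (I - {i}) (\<lambda>_. borel)) (\<lambda>\<omega>. restrict (\<lambda>j. X j \<omega>) (I - {i}))"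
    using assms(1,2) by (intro indep_var_restrict) auto
  have component_event: "{y \<in> space (PiM {i} (\<lambda>_. borel)). y i \<in> B} \<in> sets (PiM {i} (\<lambda>_. borel))"
    using assms(3) by measurable
  have joint: "(\<lambda>\<omega>. (restrict (\<lambda>j. X j \<omega>) {i}, restrict (\<lambda>j. X j \<omega>) (I - {i}))) -`
      ({y \<in> space (PiM {i} (\<lambda>_. borel)). y i \<in> B} \<times> {y \<in> space (PiM (I - {i}) (\<lambda>_. borel)). Q y}) \<inter> space M
    = {\<omega> \<in> space M. X i \<omega> \<in> B \<and> Q (\<lambda>j. X j \<omega>)}"
    by (auto simp: space_PiM assms(5))
  have component: "(\<lambda>\<omega>. restrict (\<lambda>j. X j \<omega>) {i}) -` {y \<in> space (PiM {i} (\<lambda>_. borel)). y i \<in> B} \<inter> space M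
    = {\<omega> \<in> space M. X i \<omega> \<in> B}"
    by (auto simp: space_PiM)
  have rest: "(\<lambda>\<omega>. restrict (\<lambda>j. X j \<omega>) (I - {i})) -` {y \<in> space (PiM (I - {i}) (\<lambda>_. borel)). Q y} \<inter> space M
    = {\<omega> \<in> space M. Q (\<lambda>j. X j \<omega>)}"
    by (auto simp: space_PiM assms(5))
  from indep_varD[OF split component_event assms(4)] show ?thesis
    unfolding joint component rest .
qed

lemma (in prob_space) sum_prob_step_up_index_le_1:
  fixes X :: "nat \<Rightarrow> 'a \<Rightarrow> real"
  assumes "finite L" and "\<And>j. j \<in> L \<Longrightarrow> X j \<in> borel_measurable M"
  shows "(\<Sum>r\<in>{1..N}. prob {\<omega> \<in> space M. step_up_index s N c (\<lambda>j. X j \<omega>) L r}) \<le> 1"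
proof -
  have "(\<Sum>r\<in>{1..N}. prob {\<omega> \<in> space M. step_up_index s N c (\<lambda>j. X j \<omega>) L r})
      = prob (\<Union>r\<in>{1..N}. {\<omega> \<in> space M. step_up_index s N c (\<lambda>j. X j \<omega>) L r})"
    using sets_step_up_index[OF assms] step_up_index_unique
    by (intro measure_finite_Union[symmetric]) (auto simp: disjoint_family_on_def)
  also have "\<dots> \<le> 1" by (rule prob_le_1)
  finally show ?thesis .
qed

lemma (in prob_space) prob_step_up_index_le_sum_remove:
  fixes X :: "nat \<Rightarrow> 'a \<Rightarrow> real"
  assumes "finite I" and "card I \<le> N" and "mono s"
    and "indep_vars (\<lambda>_. borel) X I" and "\<And>i. i \<in> I \<Longrightarrow> X i \<in> borel_measurable M"
    and "\<And>i. i \<in> I \<Longrightarrow> prob {\<omega> \<in> space M. X i \<omega> \<le> s r} \<le> p"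
  shows "real r * prob {\<omega> \<in> space M. step_up_index s N 0 (\<lambda>j. X j \<omega>) I r}
    \<le> p * (\<Sum>i\<in>I. prob {\<omega> \<in> space M. step_up_index s N 1 (\<lambda>j. X j \<omega>) (I - {i}) r})"
proof -
  define E where "E = {\<omega> \<in> space M. step_up_index s N 0 (\<lambda>j. X j \<omega>) I r}"
  define E' where "E' i = {\<omega> \<in> space M. step_up_index s N 1 (\<lambda>j. X j \<omega>) (I - {i}) r}" for i
  have E_event: "E \<in> events"
    unfolding E_def using assms(1,5) by (rule sets_step_up_index)
  have "real r * prob E = (\<Sum>i\<in>I. prob (E \<inter> {\<omega> \<in> space M. X i \<omega> \<le> s r}))"
  proof (rule sum_measure_Int_eq_card[symmetric])
    fix \<omega> assume "\<omega> \<in> E"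
    then have "card {j \<in> I. X j \<omega> \<le> s r} = r"
      unfolding E_def using assms(1-3) by (intro step_up_index_card_eq) auto
    then show "card {i \<in> I. \<omega> \<in> {\<omega> \<in> space M. X i \<omega> \<le> s r}} = r"
      using \<open>\<omega> \<in> E\<close> by (simp add: E_def)
  qed (use assms(1,5) E_event in auto)
  also have "\<dots> = (\<Sum>i\<in>I. prob {\<omega> \<in> space M. X i \<omega> \<in> {..s r} \<and>
      step_up_index s N 1 (\<lambda>j. X j \<omega>) (I - {i}) r})"
    using step_up_index_remove[OF assms(3,1)] unfolding E_def
    by (intro sum.cong refl arg_cong[where f=prob]) auto
  also have "\<dots> = (\<Sum>i\<in>I. prob {\<omega> \<in> space M. X i \<omega> \<in> {..s r}} * prob (E' i))"
  proof (intro sum.cong refl)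
    fix i assume "i \<in> I"
    have "(\<lambda>y. y j) \<in> borel_measurable (PiM (I - {i}) (\<lambda>_. borel))" if "j \<in> I - {i}" for j
      using that by (rule measurable_component_singleton)
    then have rest_event: "{y \<in> space (PiM (I - {i}) (\<lambda>_. borel)). step_up_index s N 1 y (I - {i}) r}
        \<in> sets (PiM (I - {i}) (\<lambda>_. borel))"
      using sets_step_up_index[of "I - {i}" "\<lambda>j y. y j"] assms(1) by simp
    show "prob {\<omega> \<in> space M. X i \<omega> \<in> {..s r} \<and> step_up_index s N 1 (\<lambda>j. X j \<omega>) (I - {i}) r}
        = prob {\<omega> \<in> space M. X i \<omega> \<in> {..s r}} * prob (E' i)"
      unfolding E'_def
      by (rule indep_vars_prob_component_rest[where Q="\<lambda>y. step_up_index s N 1 y (I - {i}) r",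
            OF assms(4) \<open>i \<in> I\<close> _ rest_event step_up_index_restrict]) simp
  qed
  also have "\<dots> \<le> (\<Sum>i\<in>I. p * prob (E' i))"
    using assms(6) by (intro sum_mono mult_right_mono) auto
  finally show ?thesis
    by (simp add: E_def E'_def sum_distrib_left)
qed

lemma (in prob_space) prob_ex_step_up_index_le:
  fixes X :: "nat \<Rightarrow> 'a \<Rightarrow> real"
  assumes "finite I" and "card I = N" and "mono s" and "0 \<le> \<alpha>"
    and "indep_vars (\<lambda>_. borel) X I" and "\<And>i. i \<in> I \<Longrightarrow> X i \<in> borel_measurable M"
    and "\<And>i r. i \<in> I \<Longrightarrow> r \<in> {1..N} \<Longrightarrow> prob {\<omega> \<in> space M. X i \<omega> \<le> s r} \<le> \<alpha> * r / N"
  shows "prob {\<omega> \<in> space M. \<exists>r\<in>{1..N}. step_up_index s N 0 (\<lambda>j. X j \<omega>) I r} \<le> \<alpha>"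
proof -
  define E where "E r = {\<omega> \<in> space M. step_up_index s N 0 (\<lambda>j. X j \<omega>) I r}" for r
  define E' where "E' i r = {\<omega> \<in> space M. step_up_index s N 1 (\<lambda>j. X j \<omega>) (I - {i}) r}" for i r
  have "prob {\<omega> \<in> space M. \<exists>r\<in>{1..N}. step_up_index s N 0 (\<lambda>j. X j \<omega>) I r} = prob (\<Union>r\<in>{1..N}. E r)"
    unfolding E_def by (rule arg_cong[where f=prob]) auto
  also have "\<dots> \<le> (\<Sum>r\<in>{1..N}. prob (E r))"
    unfolding E_def using sets_step_up_index[OF assms(1,6)]
    by (intro finite_measure_subadditive_finite) auto
  also have "\<dots> \<le> (\<Sum>r\<in>{1..N}. \<alpha> / N * (\<Sum>i\<in>I. prob (E' i r)))"
  proof (rule sum_mono)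
    fix r assume r: "r \<in> {1..N}"
    have "real r * prob (E r) \<le> \<alpha> * r / N * (\<Sum>i\<in>I. prob (E' i r))"
      unfolding E_def E'_def using assms(1-3,5,6) assms(7)[OF _ r]
      by (intro prob_step_up_index_le_sum_remove) auto
    also have "\<dots> = real r * (\<alpha> / N * (\<Sum>i\<in>I. prob (E' i r)))"
      by simp
    finally show "prob (E r) \<le> \<alpha> / N * (\<Sum>i\<in>I. prob (E' i r))"
      by (rule mult_left_le_imp_le) (use r in simp)
  qed
  also have "\<dots> = \<alpha> / N * (\<Sum>i\<in>I. \<Sum>r\<in>{1..N}. prob (E' i r))"
    by (simp add: sum_distrib_left sum.swap[of _ I])
  also have "\<dots> \<le> \<alpha> / N * (\<Sum>i\<in>I. 1)"
    unfolding E'_def using assms(1,4,6)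
    by (intro mult_left_mono sum_mono sum_prob_step_up_index_le_1) auto
  also have "\<dots> \<le> \<alpha>"
    using assms(2,4) by (cases "N = 0") simp_all
  finally show ?thesis .
qed

lemma ex_count_le_ge_iff_grid:
  fixes y :: "nat \<Rightarrow> real"
  assumes "0 < \<delta>" and "finite L" and "card L \<le> N"
  shows "(\<exists>t>0. t / \<delta> \<le> 1 / real N * real (card {j \<in> L. y j \<le> t})) \<longleftrightarrow>
    (\<exists>k\<in>{1..N}. k \<le> card {j \<in> L. y j \<le> \<delta> * real k / real N})"
proof
  assume "\<exists>t>0. t / \<delta> \<le> 1 / real N * real (card {j \<in> L. y j \<le> t})"
  then obtain t where "0 < t" and t: "t / \<delta> \<le> real (card {j \<in> L. y j \<le> t}) / real N"
    by auto
  define k where "k = card {j \<in> L. y j \<le> t}"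
  have "k \<le> N"
    unfolding k_def using card_mono[OF assms(2), of "{j \<in> L. y j \<le> t}"] assms(3) by auto
  have "0 < t / \<delta>" using \<open>0 < t\<close> \<open>0 < \<delta>\<close> by simp
  with t have "0 < real k / real N" unfolding k_def by linarith
  then have "0 < N" and "1 \<le> k" by (auto simp: zero_less_divide_iff)
  have "t \<le> \<delta> * real k / real N"
    using t \<open>0 < \<delta>\<close> unfolding k_def by (simp add: field_simps)
  then have "k \<le> card {j \<in> L. y j \<le> \<delta> * real k / real N}"
    unfolding k_def using assms(2) by (intro card_mono) auto
  with \<open>1 \<le> k\<close> \<open>k \<le> N\<close> show "\<exists>k\<in>{1..N}. k \<le> card {j \<in> L. y j \<le> \<delta> * real k / real N}"
    by auto
next
  assume "\<exists>k\<in>{1..N}. k \<le> card {j \<in> L. y j \<le> \<delta> * real k / real N}"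
  then obtain k where k: "k \<in> {1..N}" "k \<le> card {j \<in> L. y j \<le> \<delta> * real k / real N}"
    by auto
  define t where "t = \<delta> * real k / real N"
  have "0 < t" using k assms(1) unfolding t_def by simp
  moreover have "t / \<delta> \<le> 1 / real N * real (card {j \<in> L. y j \<le> t})"
    using k assms(1) unfolding t_def by (simp add: divide_right_mono)
  ultimately show "\<exists>t>0. t / \<delta> \<le> 1 / real N * real (card {j \<in> L. y j \<le> t})" by blast
qed

lemma all_count_le_less_iff_not_step_up:
  fixes y :: "nat \<Rightarrow> real"
  assumes "0 < \<delta>" and "finite L" and "card L \<le> N"
  shows "(\<forall>t>0. 1 / real N * real (card {j \<in> L. y j \<le> t}) < t / \<delta>) \<longleftrightarrow>
    \<not> (\<exists>r\<in>{1..N}. step_up_index (\<lambda>k. \<delta> * real k / real N) N 0 y L r)"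
  using ex_count_le_ge_iff_grid[OF assms, of y] ex_step_up_index_iff[of N _ 0 y L]
  by (auto simp: not_le)

theorem mainTheorem1:
  fixes M :: "'a measure" and U :: "nat \<Rightarrow> 'a \<Rightarrow> real" and N :: nat and \<delta> :: real
  assumes "prob_space M"
    and "N \<ge> 1"
    and "\<And>i. i \<in> {1..N} \<Longrightarrow> U i \<in> borel_measurable M"
    and "prob_space.indep_vars M (\<lambda>_. borel) U {1..N}"
    and "\<And>i x. i \<in> {1..N} \<Longrightarrow> 0 \<le> x \<Longrightarrow> x \<le> 1 \<Longrightarrow>
            measure M {\<omega> \<in> space M. U i \<omega> \<le> x} \<le> x"
    and "\<And>i. i \<in> {1..N} \<Longrightarrow> measure M {\<omega> \<in> space M. U i \<omega> < 0} = 0"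
    and "0 < \<delta>" and "\<delta> \<le> 1"
  shows "measure M {\<omega> \<in> space M. \<forall>t>0.
            (1 / real N) * real (card {i \<in> {1..N}. U i \<omega> \<le> t}) < t / \<delta>} \<ge> 1 - \<delta>"
proof -
  interpret prob_space M by fact
  define s where "s k = \<delta> * real k / real N" for k
  define bad where "bad = {\<omega> \<in> space M. \<exists>r\<in>{1..N}. step_up_index s N 0 (\<lambda>j. U j \<omega>) {1..N} r}"
  have "mono s"
    unfolding s_def using \<open>0 < \<delta>\<close> by (intro monoI divide_right_mono) auto
  have "prob {\<omega> \<in> space M. U i \<omega> \<le> s r} \<le> \<delta> * r / N" if "i \<in> {1..N}" "r \<in> {1..N}" for i r
  proof -
    have "0 \<le> s r" and "s r \<le> \<delta>"
      using that \<open>0 < \<delta>\<close> by (simp_all add: s_def field_simps)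
    with assms(5)[OF that(1), of "s r"] \<open>\<delta> \<le> 1\<close> show ?thesis by (simp add: s_def)
  qed
  then have "prob bad \<le> \<delta>"
    unfolding bad_def using \<open>mono s\<close> \<open>0 < \<delta>\<close> assms(3,4)
    by (intro prob_ex_step_up_index_le) auto
  moreover have "bad \<in> events"
    unfolding bad_def using sets_step_up_index[of "{1..N}" U M s N 0] assms(3) by measurable
  moreover have "{\<omega> \<in> space M. \<forall>t>0. (1 / real N) * real (card {i \<in> {1..N}. U i \<omega> \<le> t}) < t / \<delta>}
      = space M - bad"
    unfolding bad_def s_def
    using all_count_le_less_iff_not_step_up[where L="{1..N}" and N=N, OF \<open>0 < \<delta>\<close>] by auto
  ultimately show ?thesis by (simp add: prob_compl)
qed

end
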